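(* Let $\mathcal{C}$, $C_0=\{c_0\}$, $f$ and $r$ be as in the context. Fix $\lambda\in[0,1]$, a discount factor $\gamma$, a random trip-detail variable $X$ with distribution $P$, real-valued measurable functions $u(X)$ and $\tilde u(X)$, a mode-selection policy $\pi_x(X,C)\in[0,1]$, a conditional distribution of the realized fare $p'\ge0$ given $X$, and a coupon-selection policy $\pi_c(\cdot\mid p',C)$ (a probability distribution on $C$ for every $p'\ge0$, $C\in\mathcal C$). Suppose real-valued functions $U$ on $\mathcal C$, $U_x(X,C)$, $U_c(p',C)$ (with all expectations finite) satisfy, for all $C\in\mathcal C$, $X$, $p'\ge0$, $$U(C)=(1-\lambda)\gamma\,U(f(C))+\lambda\,\mathbb{E}_X\big[U_x(X,C)\big],$$ $$U_x(X,C)=\big(1-\pi_x(X,C)\big)\gamma\,U(f(C))+\pi_x(X,C)\Big[u(X)+\mathbb{E}_{p'\mid X}\big[U_c(p',C)\big]\Big]+\tilde u(X),$$ $$U_c(p',C)=\sum_{c\in C}\pi_c(c\mid p',C)\big[r(p',c)+\gamma\,U(f(C,c))\big].$$ Define $V(C)=U(C)-U(C_0)$ and $V_c(p',C)=U_c(p',C)-U_c(p',C_0)$. Then for all $C\in\mathcal C$ and $p'\ge0$, $$V(C)=\gamma V(f(C))+\lambda\,\mathbb{E}_X\Big\{\pi_x(X,C)\Big[u(X)+\mathbb{E}_{p'\mid X}\big[V_c(p',C)\big]-\gamma V(f(C))\Big]-\pi_x(X,C_0)\,u(X)\Big\},$$ $$V_c(p',C)=\sum_{c\in C}\pi_c(c\mid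 p',C)\big[r(p',c)+\gamma V(f(C,c))\big],\qquad V(C_0)=0.$$
   Context: A coupon group is a triple $c=\langle v,T,n\rangle\in\mathbb{R}\times\mathbb{N}\times\mathbb{N}^+$ (face value $v$, remaining time to expiration $T$, number of coupons $n$). The default (zero-valued) group is $c_0=\langle 0,0,1\rangle$. A coupon set is a finite set of coupon groups containing $c_0$ in which no two groups have the same pair $(v,T)$; $\mathcal C$ is the set of all coupon sets and $C_0=\{c_0\}$. For a group, $f_c(\langle v,T,n\rangle)=\langle v,T-1,n\rangle$ if $v>0$, $n>0$ and $T\ge 1$, and $f_c(\langle v,T,n\rangle)=c_0$ otherwise. For $C\in\mathcal C$ and $c=\langle v,T,n\rangle\in C$, $f(C,c)=\{f_c(c'):c'\in C\setminus\{c\}\}\cup\{f_c(\langle v,T,n-1\rangle)\}$ and $f(C):=f(C,c_0)$; in particular $f(C_0)=f(C_0,c_0)=C_0$. The redemption value is $r(p',\langle v,T,n\rangle)=\min(v,p')$ for a realized fare $p'\ge 0$, so $r(p',c_0)=0$. $\mathbb{E}_X$ is expectation over $X\sim P$, $\mathbb{E}_{p'\mid X}$ over the realized fare given $X$. *)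

theory Defs
  imports "HOL-Probability.Probability"
begin

text \<open>A coupon group is a triple (v, T, n) : face value, remaining time, number of coupons.\<close>
type_synonym coupon = "real \<times> nat \<times> nat"
type_synonym coupon_set = "coupon set"

definition c0 :: coupon where "c0 = (0, 0, 1)"

definition C0 :: coupon_set where "C0 = {c0}"

definition coupon_sets :: "coupon_set set" where
  "coupon_sets = {C. finite C \<and> c0 \<in> C \<and> (\<forall>c\<in>C. snd (snd c) \<ge> 1) \<and>
      (\<forall>c\<in>C. \<forall>c'\<in>C. fst c = fst c' \<and> fst (snd c) = fst (snd c') \<longrightarrow> c = c')}"

fun fc :: "coupon \<Rightarrow> coupon" where
  "fc (v, T, n) = (if v > 0 \<and> n > 0 \<and> T \<ge> 1 then (v, T - 1, n) else c0)"

definition fC :: "coupon_set \<Rightarrow> coupon \<Rightarrow> coupon_set" where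
  "fC C c = fc ` (C - {c}) \<union> {fc (fst c, fst (snd c), snd (snd c) - 1)}"

definition f :: "coupon_set \<Rightarrow> coupon_set" where
  "f C = fC C c0"

definition r :: "real \<Rightarrow> coupon \<Rightarrow> real" where
  "r p c = min (fst c) p"

end

theory Submission
  imports Defs
begin

text \<open>The empty coupon set C0 is absorbing and offers nothing to redeem, so U(C0) = gam U(C0) +
  lam E[pix(X,C0) u(X) + ut(X)] and U_c(p', C0) = gam U(C0). Subtracting the equations at C0 from
  those at C cancels ut and all terms constant in C; since the coupon-selection weights sum to one,
  the constant gam U(C0) can be moved inside the sum defining U_c.\<close>

lemma C0_in_coupon_sets: "C0 \<in> coupon_sets"
  by (simp add: coupon_sets_def C0_def c0_def)

lemma f_C0: "f C0 = C0"
  by (simp add: f_def fC_def C0_def c0_def)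

lemma fC_C0_c0: "fC C0 c0 = C0"
  by (simp add: fC_def C0_def c0_def)

lemma r_c0: "0 \<le> p \<Longrightarrow> r p c0 = 0"
  by (simp add: r_def c0_def)

lemma sum_weighted_diff_const:
  fixes w a b :: "'a \<Rightarrow> real"
  assumes "sum w A = 1"
  shows "(\<Sum>c\<in>A. w c * (a c + g * b c)) - g * k = (\<Sum>c\<in>A. w c * (a c + g * (b c - k)))"
proof -
  have "(\<Sum>c\<in>A. w c * (a c + g * (b c - k))) = (\<Sum>c\<in>A. w c * (a c + g * b c)) - g * k * sum w A"
    by (simp add: algebra_simps sum_subtractf sum_distrib_left sum_distrib_right)
  then show ?thesis
    using assms by simp
qed

lemma (in prob_space) integral_AE_eq_const:
  fixes h :: "'a \<Rightarrow> real"
  assumes "integrable M h" "AE x in M. h x = k"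
  shows "(\<integral>x. h x \<partial>M) = k"
proof -
  have "(\<integral>x. h x \<partial>M) = (\<integral>x. k \<partial>M)"
    using assms by (intro integral_cong_AE) auto
  then show ?thesis
    using prob_space by simp
qed

lemma (in prob_space) integral_diff_const:
  fixes h :: "'a \<Rightarrow> real"
  shows "integrable M h \<Longrightarrow> (\<integral>x. h x - k \<partial>M) = (\<integral>x. h x \<partial>M) - k"
  using prob_space by simp

theorem proposition1:
  fixes lam gam :: real
    and P :: "'x measure"
    and Q :: "'x \<Rightarrow> real measure"
    and u ut :: "'x \<Rightarrow> real"
    and pix :: "'x \<Rightarrow> coupon_set \<Rightarrow> real"
    and pic :: "coupon \<Rightarrow> real \<Rightarrow> coupon_set \<Rightarrow> real"
    and U :: "coupon_set \<Rightarrow> real"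
    and Ux :: "'x \<Rightarrow> coupon_set \<Rightarrow> real"
    and Uc :: "real \<Rightarrow> coupon_set \<Rightarrow> real"
  assumes lam: "0 \<le> lam" "lam \<le> 1"
    and P: "prob_space P"
    and u_meas: "u \<in> borel_measurable P"
    and ut_meas: "ut \<in> borel_measurable P"
    and pix: "\<And>x C. x \<in> space P \<Longrightarrow> C \<in> coupon_sets \<Longrightarrow> 0 \<le> pix x C \<and> pix x C \<le> 1"
    and Q: "\<And>x. x \<in> space P \<Longrightarrow> prob_space (Q x)"
    and Q_nonneg: "\<And>x. x \<in> space P \<Longrightarrow> (AE p in Q x. 0 \<le> p)"
    and pic_nonneg: "\<And>c p C. 0 \<le> p \<Longrightarrow> C \<in> coupon_sets \<Longrightarrow> c \<in> C \<Longrightarrow> 0 \<le> pic c p C"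
    and pic_sum: "\<And>p C. 0 \<le> p \<Longrightarrow> C \<in> coupon_sets \<Longrightarrow> (\<Sum>c\<in>C. pic c p C) = 1"
    and Ux_int: "\<And>C. C \<in> coupon_sets \<Longrightarrow> integrable P (\<lambda>x. Ux x C)"
    and Uc_int: "\<And>x C. x \<in> space P \<Longrightarrow> C \<in> coupon_sets \<Longrightarrow> integrable (Q x) (\<lambda>p. Uc p C)"
    and eqU: "\<And>C. C \<in> coupon_sets \<Longrightarrow>
        U C = (1 - lam) * gam * U (f C) + lam * (\<integral>x. Ux x C \<partial>P)"
    and eqUx: "\<And>x C. x \<in> space P \<Longrightarrow> C \<in> coupon_sets \<Longrightarrow>
        Ux x C = (1 - pix x C) * gam * U (f C)
                 + pix x C * (u x + (\<integral>p. Uc p C \<partial>Q x)) + ut x"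
    and eqUc: "\<And>p C. 0 \<le> p \<Longrightarrow> C \<in> coupon_sets \<Longrightarrow>
        Uc p C = (\<Sum>c\<in>C. pic c p C * (r p c + gam * U (fC C c)))"
  defines "V \<equiv> (\<lambda>C. U C - U C0)"
    and "Vc \<equiv> (\<lambda>p C. Uc p C - Uc p C0)"
  shows "(\<forall>C \<in> coupon_sets.
            V C = gam * V (f C) + lam * (\<integral>x. (pix x C * (u x + (\<integral>p. Vc p C \<partial>Q x) - gam * V (f C))
                                               - pix x C0 * u x) \<partial>P))
       \<and> (\<forall>C \<in> coupon_sets. \<forall>p. 0 \<le> p \<longrightarrow>
            Vc p C = (\<Sum>c\<in>C. pic c p C * (r p c + gam * V (fC C c))))
       \<and> V C0 = 0"
proof (intro conjI ballI allI impI)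
  interpret P: prob_space P by (rule P)
  note C0 = C0_in_coupon_sets
  have Uc_C0: "Uc p C0 = gam * U C0" if "0 \<le> p" for p
    using eqUc[OF that C0] pic_sum[OF that C0] by (simp add: C0_def fC_C0_c0[unfolded C0_def] r_c0[OF that])
  have int_Uc_C0: "(\<integral>p. Uc p C0 \<partial>Q x) = gam * U C0" if x: "x \<in> space P" for x
    using Q_nonneg[OF x] Uc_C0
    by (intro prob_space.integral_AE_eq_const[OF Q[OF x] Uc_int[OF x C0]]) (auto elim: AE_mp)
  show "V C0 = 0"
    by (simp add: V_def)
  show "Vc p C = (\<Sum>c\<in>C. pic c p C * (r p c + gam * V (fC C c)))" if "C \<in> coupon_sets" "0 \<le> p" for C p
    using sum_weighted_diff_const[OF pic_sum[OF that(2,1)]] eqUc[OF that(2,1)] Uc_C0[OF that(2)]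
    by (simp add: Vc_def V_def)
  fix C assume C: "C \<in> coupon_sets"
  have integrand: "pix x C * (u x + (\<integral>p. Vc p C \<partial>Q x) - gam * V (f C)) - pix x C0 * u x
      = Ux x C - Ux x C0 - gam * V (f C)" if x: "x \<in> space P" for x
  proof -
    have "(\<integral>p. Vc p C \<partial>Q x) = (\<integral>p. Uc p C \<partial>Q x) - gam * U C0"
      using prob_space.integral_diff_const[OF Q[OF x] Uc_int[OF x C]] int_Uc_C0[OF x]
      by (simp add: Vc_def Uc_int[OF x C] Uc_int[OF x C0])
    then show ?thesis
      using eqUx[OF x C] eqUx[OF x C0] int_Uc_C0[OF x] by (simp add: V_def f_C0 algebra_simps)
  qed
  have "(\<integral>x. pix x C * (u x + (\<integral>p. Vc p C \<partial>Q x) - gam * V (f C)) - pix x C0 * u x \<partial>P)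
      = (\<integral>x. Ux x C - Ux x C0 - gam * V (f C) \<partial>P)"
    by (rule Bochner_Integration.integral_cong[OF refl integrand])
  also have "\<dots> = (\<integral>x. Ux x C \<partial>P) - (\<integral>x. Ux x C0 \<partial>P) - gam * V (f C)"
    using Ux_int[OF C] Ux_int[OF C0] P.prob_space by simp
  finally have expected_gain: "(\<integral>x. pix x C * (u x + (\<integral>p. Vc p C \<partial>Q x) - gam * V (f C)) - pix x C0 * u x \<partial>P)
      = (\<integral>x. Ux x C \<partial>P) - (\<integral>x. Ux x C0 \<partial>P) - gam * V (f C)" .
  show "V C = gam * V (f C) + lam * (\<integral>x. (pix x C * (u x + (\<integral>p. Vc p C \<partial>Q x) - gam * V (f C))
                                               - pix x C0 * u x) \<partial>P)"
    unfolding expected_gain using eqU[OF C] eqU[OF C0] by (simp add: V_def f_C0 algebra_simps)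
qed

end
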